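(* Let $M$ be a $\pi$-projective right $R$-module. Then $M$ is principally Goldie*-lifting if and only if every cyclic submodule $X$ of $M$ can be written as $X=D\oplus A$ where $D$ is a direct summand of $M$ and $A\ll M$.
   Context: $R$ is an associative ring with identity; modules are unital right $R$-modules. $M$ is $\pi$-projective if for all submodules $U,V$ with $U+V=M$ there exists $f\in\mathrm{End}(M)$ with $f(M)\subseteq U$ and $(1-f)(M)\subseteq V$. $K\ll M$ means $K$ is small in $M$. For submodules $X,Y$ of $M$, $X\,\beta^*\,Y$ means $(X+Y)/X\ll M/X$ and $(X+Y)/Y\ll M/Y$. $M$ is principally Goldie*-lifting if for every cyclic submodule $X$ there is a direct summand $D$ of $M$ with $X\,\beta^*\,D$. *)

theory Defs
  imports "HOL-Algebra.Ring" "HOL-Algebra.AbelCoset"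
begin

text \<open>A right R-module: an additive abelian group together with a right scalar
multiplication x \<cdot> r.  The ring fields mult/one of the module record are unused.\<close>

record ('a, 'b) rmodule = "'b ring" +
  rsmult :: "'b \<Rightarrow> 'a \<Rightarrow> 'b"

locale right_module = R?: ring R + M?: abelian_group M
  for R :: "('a, 'c) ring_scheme" and M :: "('a, 'b, 'd) rmodule_scheme" +
  assumes rsmult_closed: "\<lbrakk>x \<in> carrier M; r \<in> carrier R\<rbrakk> \<Longrightarrow> rsmult M x r \<in> carrier M"
    and rsmult_add_l: "\<lbrakk>x \<in> carrier M; y \<in> carrier M; r \<in> carrier R\<rbrakk> \<Longrightarrow>
         rsmult M (x \<oplus>\<^bsub>M\<^esub> y) r = rsmult M x r \<oplus>\<^bsub>M\<^esub> rsmult M y r"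
    and rsmult_add_r: "\<lbrakk>x \<in> carrier M; r \<in> carrier R; s \<in> carrier R\<rbrakk> \<Longrightarrow>
         rsmult M x (r \<oplus>\<^bsub>R\<^esub> s) = rsmult M x r \<oplus>\<^bsub>M\<^esub> rsmult M x s"
    and rsmult_assoc: "\<lbrakk>x \<in> carrier M; r \<in> carrier R; s \<in> carrier R\<rbrakk> \<Longrightarrow>
         rsmult M x (r \<otimes>\<^bsub>R\<^esub> s) = rsmult M (rsmult M x r) s"
    and rsmult_one: "x \<in> carrier M \<Longrightarrow> rsmult M x \<one>\<^bsub>R\<^esub> = x"

definition submod :: "('a, 'c) ring_scheme \<Rightarrow> ('a, 'b, 'd) rmodule_scheme \<Rightarrow> 'b set \<Rightarrow> bool" where
  "submod R M N \<longleftrightarrow> N \<subseteq> carrier M \<and> \<zero>\<^bsub>M\<^esub> \<in> N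
     \<and> (\<forall>x\<in>N. \<forall>y\<in>N. x \<oplus>\<^bsub>M\<^esub> y \<in> N) \<and> (\<forall>x\<in>N. \<ominus>\<^bsub>M\<^esub> x \<in> N)
     \<and> (\<forall>x\<in>N. \<forall>r\<in>carrier R. rsmult M x r \<in> N)"

definition small :: "('a, 'c) ring_scheme \<Rightarrow> ('a, 'b, 'd) rmodule_scheme \<Rightarrow> 'b set \<Rightarrow> bool" where
  "small R M K \<longleftrightarrow> submod R M K \<and>
     (\<forall>L. submod R M L \<and> K <+>\<^bsub>M\<^esub> L = carrier M \<longrightarrow> L = carrier M)"

definition quot :: "('a, 'b, 'd) rmodule_scheme \<Rightarrow> 'b set \<Rightarrow> ('a, 'b set) rmodule" where
  "quot M X = \<lparr>carrier = a_rcosets\<^bsub>M\<^esub> X, mult = (\<lambda>A B. undefined), one = undefined,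
     zero = X, add = set_add M,
     rsmult = (\<lambda>C r. (\<Union>c\<in>C. {rsmult M c r}) <+>\<^bsub>M\<^esub> X)\<rparr>"

definition quot_sub :: "('a, 'b, 'd) rmodule_scheme \<Rightarrow> 'b set \<Rightarrow> 'b set \<Rightarrow> 'b set set" where
  "quot_sub M N X = (\<lambda>y. X +>\<^bsub>M\<^esub> y) ` N"

definition beta_star :: "('a, 'c) ring_scheme \<Rightarrow> ('a, 'b, 'd) rmodule_scheme \<Rightarrow> 'b set \<Rightarrow> 'b set \<Rightarrow> bool" where
  "beta_star R M X Y \<longleftrightarrow>
     small R (quot M X) (quot_sub M (X <+>\<^bsub>M\<^esub> Y) X) \<and>
     small R (quot M Y) (quot_sub M (X <+>\<^bsub>M\<^esub> Y) Y)"

text \<open>Endomorphisms of M (values outside the carrier are irrelevant).\<close>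
definition endo :: "('a, 'c) ring_scheme \<Rightarrow> ('a, 'b, 'd) rmodule_scheme \<Rightarrow> ('b \<Rightarrow> 'b) \<Rightarrow> bool" where
  "endo R M f \<longleftrightarrow> f \<in> carrier M \<rightarrow> carrier M
     \<and> (\<forall>x\<in>carrier M. \<forall>y\<in>carrier M. f (x \<oplus>\<^bsub>M\<^esub> y) = f x \<oplus>\<^bsub>M\<^esub> f y)
     \<and> (\<forall>x\<in>carrier M. \<forall>r\<in>carrier R. f (rsmult M x r) = rsmult M (f x) r)"

definition pi_projective :: "('a, 'c) ring_scheme \<Rightarrow> ('a, 'b, 'd) rmodule_scheme \<Rightarrow> bool" where
  "pi_projective R M \<longleftrightarrow> (\<forall>U V. submod R M U \<and> submod R M V \<and> U <+>\<^bsub>M\<^esub> V = carrier M \<longrightarrow>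
     (\<exists>f. endo R M f \<and> f ` carrier M \<subseteq> U \<and> (\<lambda>x. x \<ominus>\<^bsub>M\<^esub> f x) ` carrier M \<subseteq> V))"

definition direct_summand :: "('a, 'c) ring_scheme \<Rightarrow> ('a, 'b, 'd) rmodule_scheme \<Rightarrow> 'b set \<Rightarrow> bool" where
  "direct_summand R M D \<longleftrightarrow> submod R M D \<and>
     (\<exists>E. submod R M E \<and> D <+>\<^bsub>M\<^esub> E = carrier M \<and> D \<inter> E = {\<zero>\<^bsub>M\<^esub>})"

definition cyclic_submod :: "('a, 'c) ring_scheme \<Rightarrow> ('a, 'b, 'd) rmodule_scheme \<Rightarrow> 'b set \<Rightarrow> bool" where
  "cyclic_submod R M X \<longleftrightarrow> (\<exists>x\<in>carrier M. X = (\<lambda>r. rsmult M x r) ` carrier R)"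

definition principally_Goldie_star_lifting :: "('a, 'c) ring_scheme \<Rightarrow> ('a, 'b, 'd) rmodule_scheme \<Rightarrow> bool" where
  "principally_Goldie_star_lifting R M \<longleftrightarrow>
     (\<forall>X. cyclic_submod R M X \<longrightarrow> (\<exists>D. direct_summand R M D \<and> beta_star R M X D))"

end

theory Submission
  imports Defs
begin

(*
  Proposition: a pi-projective module M is principally Goldie*-lifting iff every cyclic
  submodule X decomposes as X = D + A with D a direct summand of M, A small in M and
  D \<inter> A = 0.

  Its
  key consequence is lemma small_quot_iff: for Y \<subseteq> N, the image N/Y is small in M/Y iff
  every submodule L \<supseteq> Y with N + L = M equals M.  This turns the beta* relation into a
  statement about M alone.

  (\<Leftarrow>) If X = D + A with A small, then (X+D)/X = 0 and X/D is small in M/D directly by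
      small_quot_iff, so X \<beta>* D.
  (\<Rightarrow>) If X \<beta>* D with M = D \<oplus> E, then X + E = M; pi-projectivity yields an endomorphism
      f with f(M) \<subseteq> X and (1-f)(M) \<subseteq> E, so D' = f(D) \<subseteq> X is another complement of E.
      By the modular law X = D' \<oplus> (X \<inter> E), and X \<inter> E is small in M because (X+D)/D is
      small in M/D.
*)

lemma quot_simps [simp]:
  "carrier (quot M Y) = a_rcosets\<^bsub>M\<^esub> Y"
  "zero (quot M Y) = Y"
  "add (quot M Y) = set_add M"
  "rsmult (quot M Y) C r = (\<Union>c\<in>C. {rsmult M c r}) <+>\<^bsub>M\<^esub> Y"
  by (simp_all add: quot_def)

context right_module begin

lemma smult_zero_r: "x \<in> carrier M \<Longrightarrow> rsmult M x \<zero>\<^bsub>R\<^esub> = \<zero>\<^bsub>M\<^esub>"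
proof -
  assume x: "x \<in> carrier M"
  have "rsmult M x \<zero>\<^bsub>R\<^esub> = rsmult M x (\<zero>\<^bsub>R\<^esub> \<oplus>\<^bsub>R\<^esub> \<zero>\<^bsub>R\<^esub>)" by simp
  also have "\<dots> = rsmult M x \<zero>\<^bsub>R\<^esub> \<oplus>\<^bsub>M\<^esub> rsmult M x \<zero>\<^bsub>R\<^esub>"
    using x rsmult_add_r[of x "\<zero>\<^bsub>R\<^esub>" "\<zero>\<^bsub>R\<^esub>"] by simp
  finally show ?thesis
    using x rsmult_closed by (metis M.l_zero M.add.right_cancel R.zero_closed M.zero_closed)
qed

lemma smult_neg_r:
  "x \<in> carrier M \<Longrightarrow> r \<in> carrier R \<Longrightarrow> rsmult M x (\<ominus>\<^bsub>R\<^esub> r) = \<ominus>\<^bsub>M\<^esub> rsmult M x r"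
proof -
  assume x: "x \<in> carrier M" and r: "r \<in> carrier R"
  have "rsmult M x (\<ominus>\<^bsub>R\<^esub> r) \<oplus>\<^bsub>M\<^esub> rsmult M x r = rsmult M x (\<ominus>\<^bsub>R\<^esub> r \<oplus>\<^bsub>R\<^esub> r)"
    using x r by (simp add: rsmult_add_r)
  also have "\<dots> = \<zero>\<^bsub>M\<^esub>" using x r by (simp add: smult_zero_r R.l_neg)
  finally show ?thesis
    using x r rsmult_closed by (metis M.add.inv_equality R.a_inv_closed)
qed

lemma submod_sub: "submod R M N \<Longrightarrow> N \<subseteq> carrier M" by (simp add: submod_def)
lemma submod_zero: "submod R M N \<Longrightarrow> \<zero>\<^bsub>M\<^esub> \<in> N" by (simp add: submod_def)
lemma submod_add: "submod R M N \<Longrightarrow> x \<in> N \<Longrightarrow> y \<in> N \<Longrightarrow> x \<oplus>\<^bsub>M\<^esub> y \<in> N"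
  by (simp add: submod_def)
lemma submod_neg: "submod R M N \<Longrightarrow> x \<in> N \<Longrightarrow> \<ominus>\<^bsub>M\<^esub> x \<in> N" by (simp add: submod_def)
lemma submod_smult: "submod R M N \<Longrightarrow> x \<in> N \<Longrightarrow> r \<in> carrier R \<Longrightarrow> rsmult M x r \<in> N"
  by (simp add: submod_def)

lemma submod_abelian: "submod R M N \<Longrightarrow> abelian_subgroup N M"
  by (rule abelian_subgroupI3[OF additive_subgroupI], rule M.add.subgroupI)
     (auto simp: submod_def M.abelian_group_axioms)

lemma cyclic_submod: "cyclic_submod R M X \<Longrightarrow> submod R M X"
  unfolding cyclic_submod_def submod_def
  apply (elim bexE)
  apply (auto simp: rsmult_closed)
     apply (metis R.zero_closed smult_zero_r image_eqI)
    apply (metis R.add.m_closed rsmult_add_r image_eqI)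
   apply (metis R.a_inv_closed smult_neg_r image_eqI)
  apply (metis R.m_closed rsmult_assoc image_eqI)
  done

subsection \<open>The lattice of submodules\<close>

lemma mem_sum: "x \<in> A <+>\<^bsub>M\<^esub> B \<longleftrightarrow> (\<exists>a\<in>A. \<exists>b\<in>B. x = a \<oplus>\<^bsub>M\<^esub> b)"
  unfolding set_add_def' by auto

lemma sum_submod:
  assumes A: "submod R M A" and B: "submod R M B"
  shows "submod R M (A <+>\<^bsub>M\<^esub> B)"
  unfolding submod_def
proof (intro conjI ballI)
  have As: "A \<subseteq> carrier M" and Bs: "B \<subseteq> carrier M" using A B submod_sub by auto
  then show "A <+>\<^bsub>M\<^esub> B \<subseteq> carrier M" by (rule M.set_add_closed)
  show "\<zero>\<^bsub>M\<^esub> \<in> A <+>\<^bsub>M\<^esub> B" unfolding mem_sum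
    using submod_zero[OF A] submod_zero[OF B] by force
  fix x assume "x \<in> A <+>\<^bsub>M\<^esub> B"
  then obtain a b where a: "a \<in> A" and b: "b \<in> B" and x: "x = a \<oplus>\<^bsub>M\<^esub> b"
    unfolding mem_sum by auto
  have ac: "a \<in> carrier M" and bc: "b \<in> carrier M" using a b As Bs by auto
  {
    fix y assume "y \<in> A <+>\<^bsub>M\<^esub> B"
    then obtain a' b' where a': "a' \<in> A" and b': "b' \<in> B" and y: "y = a' \<oplus>\<^bsub>M\<^esub> b'"
      unfolding mem_sum by auto
    have "a' \<in> carrier M" "b' \<in> carrier M" using a' b' As Bs by auto
    then have "x \<oplus>\<^bsub>M\<^esub> y = (a \<oplus>\<^bsub>M\<^esub> a') \<oplus>\<^bsub>M\<^esub> (b \<oplus>\<^bsub>M\<^esub> b')"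
      unfolding x y using ac bc by (simp add: M.a_ac)
    then show "x \<oplus>\<^bsub>M\<^esub> y \<in> A <+>\<^bsub>M\<^esub> B" unfolding mem_sum
      using submod_add[OF A a a'] submod_add[OF B b b'] by blast
  }
  have "\<ominus>\<^bsub>M\<^esub> x = (\<ominus>\<^bsub>M\<^esub> a) \<oplus>\<^bsub>M\<^esub> (\<ominus>\<^bsub>M\<^esub> b)"
    unfolding x using ac bc by (simp add: M.minus_add)
  then show "\<ominus>\<^bsub>M\<^esub> x \<in> A <+>\<^bsub>M\<^esub> B" unfolding mem_sum
    using submod_neg[OF A a] submod_neg[OF B b] by blast
  fix r assume r: "r \<in> carrier R"
  have "rsmult M x r = rsmult M a r \<oplus>\<^bsub>M\<^esub> rsmult M b r"
    unfolding x using ac bc r by (simp add: rsmult_add_l)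
  then show "rsmult M x r \<in> A <+>\<^bsub>M\<^esub> B" unfolding mem_sum
    using submod_smult[OF A a r] submod_smult[OF B b r] by blast
qed

lemma sub_sum_l:
  assumes B: "submod R M B" and A: "A \<subseteq> carrier M"
  shows "A \<subseteq> A <+>\<^bsub>M\<^esub> B"
proof
  fix x assume x: "x \<in> A"
  then have "x = x \<oplus>\<^bsub>M\<^esub> \<zero>\<^bsub>M\<^esub>" using A by auto
  then show "x \<in> A <+>\<^bsub>M\<^esub> B" unfolding mem_sum using x submod_zero[OF B] by blast
qed

lemma sub_sum_r:
  assumes A: "submod R M A" and B: "B \<subseteq> carrier M"
  shows "B \<subseteq> A <+>\<^bsub>M\<^esub> B"
proof
  fix x assume x: "x \<in> B"
  then have "x = \<zero>\<^bsub>M\<^esub> \<oplus>\<^bsub>M\<^esub> x" using B by auto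
  then show "x \<in> A <+>\<^bsub>M\<^esub> B" unfolding mem_sum using x submod_zero[OF A] by blast
qed

lemma sum_least: "submod R M C \<Longrightarrow> A \<subseteq> C \<Longrightarrow> B \<subseteq> C \<Longrightarrow> A <+>\<^bsub>M\<^esub> B \<subseteq> C"
  using submod_add unfolding mem_sum subset_iff by blast

lemma spanning_submod_eq_carrier:
  assumes "A <+>\<^bsub>M\<^esub> B = carrier M" "submod R M C" "A \<subseteq> C" "B \<subseteq> C"
  shows "C = carrier M"
proof -
  have "carrier M \<subseteq> C" using sum_least[OF assms(2-4)] assms(1) by simp
  then show ?thesis using submod_sub[OF assms(2)] by blast
qed

lemma int_submod: "submod R M A \<Longrightarrow> submod R M B \<Longrightarrow> submod R M (A \<inter> B)"
  unfolding submod_def by auto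

lemma sum_zero_r:
  assumes "A \<subseteq> carrier M" shows "A <+>\<^bsub>M\<^esub> {\<zero>\<^bsub>M\<^esub>} = A"
proof -
  have "a \<oplus>\<^bsub>M\<^esub> \<zero>\<^bsub>M\<^esub> = a" if "a \<in> A" for a using assms that by auto
  then show ?thesis unfolding set_add_def' by force
qed

lemma modular_law:
  assumes A: "submod R M A" and B: "submod R M B" and C: "submod R M C" and AC: "A \<subseteq> C"
  shows "C \<inter> (A <+>\<^bsub>M\<^esub> B) = A <+>\<^bsub>M\<^esub> (B \<inter> C)"
proof
  have "A <+>\<^bsub>M\<^esub> (B \<inter> C) \<subseteq> C" by (rule sum_least[OF C AC]) blast
  moreover have "A <+>\<^bsub>M\<^esub> (B \<inter> C) \<subseteq> A <+>\<^bsub>M\<^esub> B"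
    using sub_sum_l[OF B submod_sub[OF A]] sub_sum_r[OF A submod_sub[OF B]]
    by (intro sum_least[OF sum_submod[OF A B]]) auto
  ultimately show "A <+>\<^bsub>M\<^esub> (B \<inter> C) \<subseteq> C \<inter> (A <+>\<^bsub>M\<^esub> B)" by blast
  show "C \<inter> (A <+>\<^bsub>M\<^esub> B) \<subseteq> A <+>\<^bsub>M\<^esub> (B \<inter> C)"
  proof
    fix x assume x: "x \<in> C \<inter> (A <+>\<^bsub>M\<^esub> B)"
    then obtain a b where a: "a \<in> A" and b: "b \<in> B" and xab: "x = a \<oplus>\<^bsub>M\<^esub> b"
      by (auto simp: mem_sum)
    have ac: "a \<in> carrier M" and bc: "b \<in> carrier M"
      using a b submod_sub[OF A] submod_sub[OF B] by auto
    have "b = \<ominus>\<^bsub>M\<^esub> a \<oplus>\<^bsub>M\<^esub> x" using xab ac bc by (simp add: M.r_neg1)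
    also have "\<dots> \<in> C" using x a AC submod_add[OF C submod_neg[OF C]] by auto
    finally show "x \<in> A <+>\<^bsub>M\<^esub> (B \<inter> C)" using a b xab unfolding mem_sum by blast
  qed
qed

subsection \<open>Quotient modules and the correspondence theorem\<close>

lemma quot_neg:
  assumes "abelian_subgroup Y M" "C \<in> a_rcosets\<^bsub>M\<^esub> Y"
  shows "\<ominus>\<^bsub>quot M Y\<^esub> C = a_set_inv\<^bsub>M\<^esub> C"
proof -
  interpret Y: abelian_subgroup Y M by fact
  have G: "group (M A_Mod Y)" by (rule Y.a_factorgroup_is_group)
  have carr: "carrier (M A_Mod Y) = a_rcosets\<^bsub>M\<^esub> Y"
    by (simp add: A_FactGroup_def FactGroup_def A_RCOSETS_def)
  have one: "one (M A_Mod Y) = Y"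
    by (simp add: A_FactGroup_def FactGroup_def)
  have C: "C \<in> carrier (M A_Mod Y)" using assms carr by simp
  have inv: "inv\<^bsub>M A_Mod Y\<^esub> C = a_set_inv\<^bsub>M\<^esub> C" by (rule Y.a_inv_FactGroup[OF C])
  have iin: "a_set_inv\<^bsub>M\<^esub> C \<in> a_rcosets\<^bsub>M\<^esub> Y"
    using group.inv_closed[OF G C] inv carr by simp
  have l: "a_set_inv\<^bsub>M\<^esub> C <+>\<^bsub>M\<^esub> C = Y"
    using group.l_inv[OF G C] inv one by simp
  have r: "C <+>\<^bsub>M\<^esub> a_set_inv\<^bsub>M\<^esub> C = Y"
    using group.r_inv[OF G C] inv one by simp
  have uniq: "y = a_set_inv\<^bsub>M\<^esub> C" if "y \<in> a_rcosets\<^bsub>M\<^esub> Y" "y <+>\<^bsub>M\<^esub> C = Y" for y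
  proof -
    have "inv\<^bsub>M A_Mod Y\<^esub> C = y"
      by (rule group.inv_equality[OF G]) (use that C carr one in simp_all)
    then show ?thesis using inv by simp
  qed
  have e: "\<ominus>\<^bsub>quot M Y\<^esub> C = (THE y. y \<in> a_rcosets\<^bsub>M\<^esub> Y \<and> C <+>\<^bsub>M\<^esub> y = Y \<and> y <+>\<^bsub>M\<^esub> C = Y)"
    unfolding a_inv_def m_inv_def by simp
  show ?thesis unfolding e
    by (rule the_equality) (use iin l r uniq in blast)+
qed

lemma rcos_smult:
  assumes Y: "submod R M Y" and x: "x \<in> carrier M" and r: "r \<in> carrier R"
  shows "(\<Union>c\<in>Y +>\<^bsub>M\<^esub> x. {rsmult M c r}) <+>\<^bsub>M\<^esub> Y = Y +>\<^bsub>M\<^esub> rsmult M x r"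
proof
  interpret Y: abelian_subgroup Y M using submod_abelian Y by blast
  have xr: "rsmult M x r \<in> carrier M" using x r by (rule rsmult_closed)
  show "(\<Union>c\<in>Y +>\<^bsub>M\<^esub> x. {rsmult M c r}) <+>\<^bsub>M\<^esub> Y \<subseteq> Y +>\<^bsub>M\<^esub> rsmult M x r"
  proof
    fix z assume "z \<in> (\<Union>c\<in>Y +>\<^bsub>M\<^esub> x. {rsmult M c r}) <+>\<^bsub>M\<^esub> Y"
    then obtain h h' where h: "h \<in> Y" "h' \<in> Y" and z: "z = rsmult M (h \<oplus>\<^bsub>M\<^esub> x) r \<oplus>\<^bsub>M\<^esub> h'"
      by (auto simp: set_add_def' a_r_coset_def')
    have hc: "h \<in> carrier M" "h' \<in> carrier M" "rsmult M h r \<in> carrier M"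
      using h Y.a_subset r rsmult_closed by auto
    have "rsmult M (h \<oplus>\<^bsub>M\<^esub> x) r = rsmult M h r \<oplus>\<^bsub>M\<^esub> rsmult M x r"
      using hc x r by (simp add: rsmult_add_l)
    then have "z = (rsmult M h r \<oplus>\<^bsub>M\<^esub> h') \<oplus>\<^bsub>M\<^esub> rsmult M x r"
      unfolding z using hc xr by (simp add: M.a_ac)
    moreover have "rsmult M h r \<oplus>\<^bsub>M\<^esub> h' \<in> Y"
      using submod_add[OF Y submod_smult[OF Y h(1) r] h(2)] .
    ultimately show "z \<in> Y +>\<^bsub>M\<^esub> rsmult M x r" by (auto simp: a_r_coset_def')
  qed
  show "Y +>\<^bsub>M\<^esub> rsmult M x r \<subseteq> (\<Union>c\<in>Y +>\<^bsub>M\<^esub> x. {rsmult M c r}) <+>\<^bsub>M\<^esub> Y"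
  proof
    fix z assume "z \<in> Y +>\<^bsub>M\<^esub> rsmult M x r"
    then obtain h where h: "h \<in> Y" and z: "z = h \<oplus>\<^bsub>M\<^esub> rsmult M x r"
      by (auto simp: a_r_coset_def')
    have "z = rsmult M x r \<oplus>\<^bsub>M\<^esub> h" unfolding z using h Y.a_subset xr M.a_comm by blast
    then show "z \<in> (\<Union>c\<in>Y +>\<^bsub>M\<^esub> x. {rsmult M c r}) <+>\<^bsub>M\<^esub> Y"
      using Y.a_rcos_self[OF x] h by (auto simp: set_add_def')
  qed
qed

lemma quot_sub_submod:
  assumes N: "submod R M N" and Y: "submod R M Y"
  shows "submod R (quot M Y) (quot_sub M N Y)"
proof -
  interpret Y: abelian_subgroup Y M using submod_abelian Y by blast
  have Ns: "N \<subseteq> carrier M" by (rule submod_sub[OF N])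
  show ?thesis
    unfolding submod_def quot_sub_def
  proof (intro conjI ballI)
    show "(\<lambda>y. Y +>\<^bsub>M\<^esub> y) ` N \<subseteq> carrier (quot M Y)"
      using Ns M.a_rcosetsI[OF Y.a_subset] by auto
    have "Y = Y +>\<^bsub>M\<^esub> \<zero>\<^bsub>M\<^esub>" using Y.a_rcos_const[OF Y.zero_closed] by simp
    then show "\<zero>\<^bsub>quot M Y\<^esub> \<in> (\<lambda>y. Y +>\<^bsub>M\<^esub> y) ` N"
      using submod_zero[OF N] by simp
    fix a assume "a \<in> (\<lambda>y. Y +>\<^bsub>M\<^esub> y) ` N"
    then obtain x where x: "x \<in> N" and ax: "a = Y +>\<^bsub>M\<^esub> x" by auto
    have xc: "x \<in> carrier M" using x Ns by auto
    {
      fix b assume "b \<in> (\<lambda>y. Y +>\<^bsub>M\<^esub> y) ` N"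
      then obtain y where y: "y \<in> N" and "b = Y +>\<^bsub>M\<^esub> y" by auto
      have yc: "y \<in> carrier M" using y Ns by auto
      have "a \<oplus>\<^bsub>quot M Y\<^esub> b = Y +>\<^bsub>M\<^esub> (x \<oplus>\<^bsub>M\<^esub> y)"
        using Y.a_rcos_sum[OF xc yc] ax \<open>b = _\<close> by simp
      then show "a \<oplus>\<^bsub>quot M Y\<^esub> b \<in> (\<lambda>y. Y +>\<^bsub>M\<^esub> y) ` N"
        using submod_add[OF N x y] by simp
    }
    have ac: "a \<in> a_rcosets\<^bsub>M\<^esub> Y" using ax M.a_rcosetsI[OF Y.a_subset xc] by simp
    have "\<ominus>\<^bsub>quot M Y\<^esub> a = Y +>\<^bsub>M\<^esub> (\<ominus>\<^bsub>M\<^esub> x)"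
      using quot_neg[OF Y.is_abelian_subgroup ac] Y.a_rcos_inv[OF xc] ax by simp
    then show "\<ominus>\<^bsub>quot M Y\<^esub> a \<in> (\<lambda>y. Y +>\<^bsub>M\<^esub> y) ` N"
      using submod_neg[OF N x] by simp
    fix r assume r: "r \<in> carrier R"
    have "rsmult (quot M Y) a r = Y +>\<^bsub>M\<^esub> rsmult M x r"
      using rcos_smult[OF Y xc r] ax by simp
    then show "rsmult (quot M Y) a r \<in> (\<lambda>y. Y +>\<^bsub>M\<^esub> y) ` N"
      using submod_smult[OF N x r] by simp
  qed
qed

lemma quot_sub_sum:
  assumes N1: "submod R M N1" and N2: "submod R M N2" and Y: "submod R M Y"
    and S: "N1 <+>\<^bsub>M\<^esub> N2 = carrier M"
  shows "quot_sub M N1 Y <+>\<^bsub>quot M Y\<^esub> quot_sub M N2 Y = a_rcosets\<^bsub>M\<^esub> Y"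
proof -
  interpret Y: abelian_subgroup Y M using submod_abelian Y by blast
  show ?thesis
  proof
    show "quot_sub M N1 Y <+>\<^bsub>quot M Y\<^esub> quot_sub M N2 Y \<subseteq> a_rcosets\<^bsub>M\<^esub> Y"
    proof
      fix C assume "C \<in> quot_sub M N1 Y <+>\<^bsub>quot M Y\<^esub> quot_sub M N2 Y"
      then obtain a b where a: "a \<in> N1" and b: "b \<in> N2" and C: "C = (Y +>\<^bsub>M\<^esub> a) <+>\<^bsub>M\<^esub> (Y +>\<^bsub>M\<^esub> b)"
        unfolding set_add_def'[of "quot M Y"] quot_sub_def by auto
      have ac: "a \<in> carrier M" and bc: "b \<in> carrier M" using a b submod_sub N1 N2 by auto
      have "C = Y +>\<^bsub>M\<^esub> (a \<oplus>\<^bsub>M\<^esub> b)" using C Y.a_rcos_sum[OF ac bc] by simp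
      then show "C \<in> a_rcosets\<^bsub>M\<^esub> Y" using M.a_rcosetsI[OF Y.a_subset] ac bc by simp
    qed
    show "a_rcosets\<^bsub>M\<^esub> Y \<subseteq> quot_sub M N1 Y <+>\<^bsub>quot M Y\<^esub> quot_sub M N2 Y"
    proof
      fix C assume "C \<in> a_rcosets\<^bsub>M\<^esub> Y"
      then obtain m where m: "m \<in> carrier M" and C: "C = Y +>\<^bsub>M\<^esub> m"
        unfolding A_RCOSETS_def' by auto
      have "m \<in> N1 <+>\<^bsub>M\<^esub> N2" using S m by simp
      then obtain a b where a: "a \<in> N1" and b: "b \<in> N2" and mab: "m = a \<oplus>\<^bsub>M\<^esub> b"
        unfolding set_add_def' by auto
      have ac: "a \<in> carrier M" and bc: "b \<in> carrier M" using a b submod_sub N1 N2 by auto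
      have "C = (Y +>\<^bsub>M\<^esub> a) <+>\<^bsub>M\<^esub> (Y +>\<^bsub>M\<^esub> b)" using C mab Y.a_rcos_sum[OF ac bc] by simp
      then show "C \<in> quot_sub M N1 Y <+>\<^bsub>quot M Y\<^esub> quot_sub M N2 Y"
        unfolding set_add_def'[of "quot M Y"] quot_sub_def using a b by auto
    qed
  qed
qed

lemma quot_sub_full:
  assumes N: "submod R M N" and Y: "submod R M Y" and YN: "Y \<subseteq> N"
    and F: "quot_sub M N Y = a_rcosets\<^bsub>M\<^esub> Y"
  shows "N = carrier M"
proof
  interpret Y: abelian_subgroup Y M using submod_abelian Y by blast
  show "N \<subseteq> carrier M" using N submod_sub by auto
  show "carrier M \<subseteq> N"
  proof
    fix m assume m: "m \<in> carrier M"
    have "Y +>\<^bsub>M\<^esub> m \<in> quot_sub M N Y" using F M.a_rcosetsI[OF Y.a_subset m] by simp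
    then obtain n where n: "n \<in> N" and e: "Y +>\<^bsub>M\<^esub> m = Y +>\<^bsub>M\<^esub> n" unfolding quot_sub_def by auto
    have "m \<in> Y +>\<^bsub>M\<^esub> n" using Y.a_rcos_self[OF m] e by simp
    then obtain h where h: "h \<in> Y" and mh: "m = h \<oplus>\<^bsub>M\<^esub> n" unfolding a_r_coset_def' by auto
    show "m \<in> N" using mh submod_add[OF N _ n] h YN by auto
  qed
qed

lemma preimage_submod:
  assumes Y: "submod R M Y" and L: "submod R (quot M Y) L"
  shows "submod R M (\<Union>L)" "Y \<subseteq> \<Union>L"
proof -
  interpret Y: abelian_subgroup Y M using submod_abelian Y by blast
  have Lc: "L \<subseteq> a_rcosets\<^bsub>M\<^esub> Y" using L by (simp add: submod_def)
  have YL: "Y \<in> L" using L by (simp add: submod_def)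
  then show "Y \<subseteq> \<Union>L" by auto
  have Ladd: "C <+>\<^bsub>M\<^esub> C' \<in> L" if "C \<in> L" "C' \<in> L" for C C'
    using L that unfolding submod_def by simp
  have Lneg: "a_set_inv\<^bsub>M\<^esub> C \<in> L" if "C \<in> L" for C
  proof -
    have "\<ominus>\<^bsub>quot M Y\<^esub> C \<in> L" using L that unfolding submod_def by blast
    moreover have "C \<in> a_rcosets\<^bsub>M\<^esub> Y" using Lc that by blast
    ultimately show ?thesis using quot_neg[OF Y.is_abelian_subgroup] by simp
  qed
  have Lsm: "(\<Union>c\<in>C. {rsmult M c r}) <+>\<^bsub>M\<^esub> Y \<in> L" if "C \<in> L" "r \<in> carrier R" for C r
    using L that unfolding submod_def by simp
  show "submod R M (\<Union>L)"
    unfolding submod_def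
  proof (intro conjI ballI)
    show "\<Union>L \<subseteq> carrier M"
    proof
      fix x assume "x \<in> \<Union>L"
      then obtain C where "C \<in> L" "x \<in> C" by blast
      then show "x \<in> carrier M" using Lc Y.a_rcosets_carrier by blast
    qed
    show "\<zero>\<^bsub>M\<^esub> \<in> \<Union>L" using YL Y.zero_closed by blast
    fix x assume "x \<in> \<Union>L"
    then obtain C where C: "C \<in> L" "x \<in> C" by auto
    {
      fix y assume "y \<in> \<Union>L"
      then obtain C' where C': "C' \<in> L" "y \<in> C'" by auto
      have "x \<oplus>\<^bsub>M\<^esub> y \<in> C <+>\<^bsub>M\<^esub> C'" using C C' unfolding set_add_def' by auto
      then show "x \<oplus>\<^bsub>M\<^esub> y \<in> \<Union>L" using Ladd[OF C(1) C'(1)] by auto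
    }
    have "\<ominus>\<^bsub>M\<^esub> x \<in> a_set_inv\<^bsub>M\<^esub> C" using C unfolding A_SET_INV_def' by auto
    then show "\<ominus>\<^bsub>M\<^esub> x \<in> \<Union>L" using Lneg[OF C(1)] by auto
    fix r assume r: "r \<in> carrier R"
    have xc: "x \<in> carrier M" using C Lc Y.a_rcosets_carrier by blast
    have e: "rsmult M x r \<oplus>\<^bsub>M\<^esub> \<zero>\<^bsub>M\<^esub> = rsmult M x r" using rsmult_closed[OF xc r] by simp
    have "rsmult M x r \<oplus>\<^bsub>M\<^esub> \<zero>\<^bsub>M\<^esub> \<in> (\<Union>c\<in>C. {rsmult M c r}) <+>\<^bsub>M\<^esub> Y"
      unfolding set_add_def' using C(2) Y.zero_closed by blast
    then have "rsmult M x r \<in> (\<Union>c\<in>C. {rsmult M c r}) <+>\<^bsub>M\<^esub> Y" using e by simp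
    then show "rsmult M x r \<in> \<Union>L" using Lsm[OF C(1) r] by auto
  qed
qed

lemma preimage_full:
  assumes Y: "submod R M Y" and L: "submod R (quot M Y) L" and F: "\<Union>L = carrier M"
  shows "L = carrier (quot M Y)"
proof
  interpret Y: abelian_subgroup Y M using submod_abelian Y by blast
  have Lc: "L \<subseteq> a_rcosets\<^bsub>M\<^esub> Y" using L by (simp add: submod_def)
  then show "L \<subseteq> carrier (quot M Y)" by simp
  show "carrier (quot M Y) \<subseteq> L"
  proof
    fix C assume "C \<in> carrier (quot M Y)"
    then obtain m where m: "m \<in> carrier M" and Cm: "C = Y +>\<^bsub>M\<^esub> m"
      unfolding quot_simps A_RCOSETS_def' by auto
    obtain C' where C': "C' \<in> L" "m \<in> C'" using F m by auto
    obtain c where c: "c \<in> carrier M" and C'c: "C' = Y +>\<^bsub>M\<^esub> c"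
      using C'(1) Lc unfolding A_RCOSETS_def' by auto
    have "Y +>\<^bsub>M\<^esub> c = Y +>\<^bsub>M\<^esub> m" using Y.a_repr_independence'[of m c] C' C'c c by simp
    then show "C \<in> L" using Cm C'c C' by simp
  qed
qed

lemma preimage_spans:
  assumes N: "submod R M N" and Y: "submod R M Y" and L: "submod R (quot M Y) L"
    and span: "quot_sub M N Y <+>\<^bsub>quot M Y\<^esub> L = carrier (quot M Y)"
  shows "N <+>\<^bsub>M\<^esub> \<Union>L = carrier M"
proof -
  interpret Y: abelian_subgroup Y M using submod_abelian Y by blast
  have P: "submod R M (\<Union>L)" and YP: "Y \<subseteq> \<Union>L" using preimage_submod[OF Y L] by auto
  have "carrier M \<subseteq> N <+>\<^bsub>M\<^esub> \<Union>L"
  proof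
    fix m assume m: "m \<in> carrier M"
    have "Y +>\<^bsub>M\<^esub> m \<in> quot_sub M N Y <+>\<^bsub>quot M Y\<^esub> L"
      using span M.a_rcosetsI[OF Y.a_subset m] by simp
    then obtain n C where n: "n \<in> N" and C: "C \<in> L"
      and coset: "Y +>\<^bsub>M\<^esub> m = (Y +>\<^bsub>M\<^esub> n) <+>\<^bsub>M\<^esub> C"
      unfolding set_add_def'[of "quot M Y"] quot_sub_def by auto
    have "m \<in> (Y +>\<^bsub>M\<^esub> n) <+>\<^bsub>M\<^esub> C" using Y.a_rcos_self[OF m] coset by simp
    then obtain y c where y: "y \<in> Y" and c: "c \<in> C" and myc: "m = (y \<oplus>\<^bsub>M\<^esub> n) \<oplus>\<^bsub>M\<^esub> c"
      by (auto simp: mem_sum a_r_coset_def')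
    have cP: "c \<in> \<Union>L" using c C by auto
    have "y \<in> carrier M" "n \<in> carrier M" "c \<in> carrier M"
      using y n cP Y.a_subset submod_sub[OF N] submod_sub[OF P] by auto
    then have "m = n \<oplus>\<^bsub>M\<^esub> (y \<oplus>\<^bsub>M\<^esub> c)" unfolding myc by (simp add: M.a_ac)
    moreover have "y \<oplus>\<^bsub>M\<^esub> c \<in> \<Union>L" using submod_add[OF P] YP y cP by blast
    ultimately show "m \<in> N <+>\<^bsub>M\<^esub> \<Union>L" unfolding mem_sum using n by blast
  qed
  then show ?thesis using M.set_add_closed[OF submod_sub[OF N] submod_sub[OF P]] by blast
qed

text \<open>Correspondence for small submodules: for Y \<subseteq> N, N/Y is small in M/Y iff every
  submodule L \<supseteq> Y with N + L = M is M.  This reduces the beta* relation to M itself.\<close>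
lemma small_quot_iff:
  assumes N: "submod R M N" and Y: "submod R M Y" and YN: "Y \<subseteq> N"
  shows "small R (quot M Y) (quot_sub M N Y) \<longleftrightarrow>
    (\<forall>L. submod R M L \<and> Y \<subseteq> L \<and> N <+>\<^bsub>M\<^esub> L = carrier M \<longrightarrow> L = carrier M)"
proof
  assume small: "small R (quot M Y) (quot_sub M N Y)"
  show "\<forall>L. submod R M L \<and> Y \<subseteq> L \<and> N <+>\<^bsub>M\<^esub> L = carrier M \<longrightarrow> L = carrier M"
  proof (intro allI impI)
    fix L assume "submod R M L \<and> Y \<subseteq> L \<and> N <+>\<^bsub>M\<^esub> L = carrier M"
    then have L: "submod R M L" and YL: "Y \<subseteq> L" and NL: "N <+>\<^bsub>M\<^esub> L = carrier M" by auto
    have "quot_sub M N Y <+>\<^bsub>quot M Y\<^esub> quot_sub M L Y = carrier (quot M Y)"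
      using quot_sub_sum[OF N L Y NL] by simp
    then have "quot_sub M L Y = carrier (quot M Y)"
      using small quot_sub_submod[OF L Y] unfolding small_def by blast
    then show "L = carrier M" using quot_sub_full[OF L Y YL] by simp
  qed
next
  assume H: "\<forall>L. submod R M L \<and> Y \<subseteq> L \<and> N <+>\<^bsub>M\<^esub> L = carrier M \<longrightarrow> L = carrier M"
  show "small R (quot M Y) (quot_sub M N Y)"
    unfolding small_def
  proof (intro conjI allI impI)
    show "submod R (quot M Y) (quot_sub M N Y)" by (rule quot_sub_submod[OF N Y])
    fix L assume "submod R (quot M Y) L \<and> quot_sub M N Y <+>\<^bsub>quot M Y\<^esub> L = carrier (quot M Y)"
    then have L: "submod R (quot M Y) L"
      and span: "quot_sub M N Y <+>\<^bsub>quot M Y\<^esub> L = carrier (quot M Y)" by auto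
    have "\<Union>L = carrier M"
      using H preimage_submod[OF Y L] preimage_spans[OF N Y L span] by blast
    then show "L = carrier (quot M Y)" by (rule preimage_full[OF Y L])
  qed
qed

subsection \<open>Endomorphisms and pi-projectivity\<close>

lemma endo_zero:
  assumes f: "endo R M f" shows "f \<zero>\<^bsub>M\<^esub> = \<zero>\<^bsub>M\<^esub>"
proof -
  have fz: "f \<zero>\<^bsub>M\<^esub> \<in> carrier M" using f unfolding endo_def by auto
  have "f \<zero>\<^bsub>M\<^esub> = f (\<zero>\<^bsub>M\<^esub> \<oplus>\<^bsub>M\<^esub> \<zero>\<^bsub>M\<^esub>)" by simp
  also have "\<dots> = f \<zero>\<^bsub>M\<^esub> \<oplus>\<^bsub>M\<^esub> f \<zero>\<^bsub>M\<^esub>" using f unfolding endo_def by (meson M.zero_closed)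
  finally show ?thesis using fz by (metis M.l_zero M.add.right_cancel M.zero_closed)
qed

lemma endo_neg:
  assumes f: "endo R M f" and x: "x \<in> carrier M" shows "f (\<ominus>\<^bsub>M\<^esub> x) = \<ominus>\<^bsub>M\<^esub> f x"
proof -
  have c: "f x \<in> carrier M" "f (\<ominus>\<^bsub>M\<^esub> x) \<in> carrier M" using f x unfolding endo_def by auto
  have "f (\<ominus>\<^bsub>M\<^esub> x) \<oplus>\<^bsub>M\<^esub> f x = f (\<ominus>\<^bsub>M\<^esub> x \<oplus>\<^bsub>M\<^esub> x)" using f x unfolding endo_def by auto
  also have "\<dots> = \<zero>\<^bsub>M\<^esub>" using x endo_zero[OF f] by (simp add: M.l_neg)
  finally show ?thesis using c by (metis M.add.inv_equality)
qed

lemma image_submod: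
  assumes f: "endo R M f" and D: "submod R M D"
  shows "submod R M (f ` D)"
  unfolding submod_def
proof (intro conjI ballI)
  have Ds: "D \<subseteq> carrier M" using D submod_sub by auto
  show "f ` D \<subseteq> carrier M" using f Ds unfolding endo_def by auto
  show "\<zero>\<^bsub>M\<^esub> \<in> f ` D" using endo_zero[OF f] submod_zero[OF D] by (metis image_eqI)
  fix x assume "x \<in> f ` D"
  then obtain d where d: "d \<in> D" and x: "x = f d" by auto
  have dc: "d \<in> carrier M" using d Ds by auto
  {
    fix y assume "y \<in> f ` D"
    then obtain d' where d': "d' \<in> D" and y: "y = f d'" by auto
    have "x \<oplus>\<^bsub>M\<^esub> y = f (d \<oplus>\<^bsub>M\<^esub> d')" using f d' Ds dc unfolding x y endo_def by auto
    then show "x \<oplus>\<^bsub>M\<^esub> y \<in> f ` D" using submod_add[OF D d d'] by simp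
  }
  show "\<ominus>\<^bsub>M\<^esub> x \<in> f ` D" using endo_neg[OF f dc] submod_neg[OF D d] x by (metis image_eqI)
  fix r assume r: "r \<in> carrier R"
  have "rsmult M x r = f (rsmult M d r)" using f dc r unfolding x endo_def by auto
  then show "rsmult M x r \<in> f ` D" using submod_smult[OF D d r] by simp
qed

text \<open>In a pi-projective module, if E has a complement D and X + E = M, then X contains
  a complement of E: apply an endomorphism f with f(M) \<subseteq> X and (1-f)(M) \<subseteq> E to D.\<close>
lemma pi_projective_complement_inside:
  assumes pi: "pi_projective R M" and X: "submod R M X" and D: "submod R M D"
    and E: "submod R M E" and DE: "D <+>\<^bsub>M\<^esub> E = carrier M" and DiE: "D \<inter> E = {\<zero>\<^bsub>M\<^esub>}"
    and XE: "X <+>\<^bsub>M\<^esub> E = carrier M"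
  shows "\<exists>D'. submod R M D' \<and> D' \<subseteq> X \<and> D' <+>\<^bsub>M\<^esub> E = carrier M \<and> D' \<inter> E = {\<zero>\<^bsub>M\<^esub>}"
proof -
  obtain f where f: "endo R M f" and fX: "f ` carrier M \<subseteq> X"
    and fE: "(\<lambda>x. x \<ominus>\<^bsub>M\<^esub> f x) ` carrier M \<subseteq> E"
    using pi X E XE unfolding pi_projective_def by blast
  have fc: "f x \<in> carrier M" if "x \<in> carrier M" for x using f that unfolding endo_def by auto
  have rest_E: "x \<ominus>\<^bsub>M\<^esub> f x \<in> E" if "x \<in> carrier M" for x using fE that by auto
  have split: "x = f x \<oplus>\<^bsub>M\<^esub> (x \<ominus>\<^bsub>M\<^esub> f x)" if "x \<in> carrier M" for x
    using that fc[OF that] by (simp add: M.minus_eq M.r_neg M.a_lcomm)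
  have Ds: "D \<subseteq> carrier M" and Es: "E \<subseteq> carrier M" using D E submod_sub by auto
  define D' where "D' = f ` D"
  have D': "submod R M D'" unfolding D'_def by (rule image_submod[OF f D])
  have "D' \<subseteq> X" unfolding D'_def using fX Ds by auto
  moreover have "D' <+>\<^bsub>M\<^esub> E = carrier M"
  proof (rule spanning_submod_eq_carrier[OF DE sum_submod[OF D' E]])
    show "D \<subseteq> D' <+>\<^bsub>M\<^esub> E"
    proof
      fix d assume d: "d \<in> D"
      then have "f d \<in> D'" "d \<ominus>\<^bsub>M\<^esub> f d \<in> E" using rest_E Ds unfolding D'_def by auto
      then show "d \<in> D' <+>\<^bsub>M\<^esub> E" using split d Ds unfolding mem_sum by blast
    qed
    show "E \<subseteq> D' <+>\<^bsub>M\<^esub> E" by (rule sub_sum_r[OF D' Es])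
  qed
  moreover have "D' \<inter> E \<subseteq> {\<zero>\<^bsub>M\<^esub>}"
  proof
    fix y assume y: "y \<in> D' \<inter> E"
    then obtain d where d: "d \<in> D" and yd: "y = f d" unfolding D'_def by auto
    have dc: "d \<in> carrier M" using d Ds by auto
    have "d = (d \<ominus>\<^bsub>M\<^esub> f d) \<oplus>\<^bsub>M\<^esub> f d"
      using dc fc[OF dc] by (simp add: M.minus_eq M.a_assoc M.l_neg)
    also have "\<dots> \<in> E" using submod_add[OF E rest_E[OF dc]] y yd by auto
    finally have "d = \<zero>\<^bsub>M\<^esub>" using d DiE by auto
    then show "y \<in> {\<zero>\<^bsub>M\<^esub>}" using yd endo_zero[OF f] by simp
  qed
  then have "D' \<inter> E = {\<zero>\<^bsub>M\<^esub>}" using submod_zero[OF D'] submod_zero[OF E] by auto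
  ultimately show ?thesis using D' by blast
qed

text \<open>Backward direction: if X = D + A with A small in M, then X \<beta>* D:
  X + D = X, so (X+D)/X is zero, and X/D is small in M/D because A is small in M.\<close>
lemma beta_star_of_sum_with_small:
  assumes X: "submod R M X" and D: "submod R M D" and A: "small R M A"
    and XDA: "X = D <+>\<^bsub>M\<^esub> A"
  shows "beta_star R M X D"
proof -
  have A_sub: "submod R M A" using A by (simp add: small_def)
  have DX: "D \<subseteq> X" using sub_sum_l[OF A_sub submod_sub[OF D]] XDA by simp
  have XD: "X <+>\<^bsub>M\<^esub> D = X"
    using sum_least[OF X subset_refl DX] sub_sum_l[OF D submod_sub[OF X]] by blast
  have "small R (quot M X) (quot_sub M X X)"
    unfolding small_quot_iff[OF X X subset_refl]
    using spanning_submod_eq_carrier subset_refl by blast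
  moreover have "small R (quot M D) (quot_sub M X D)"
    unfolding small_quot_iff[OF X D DX]
  proof (intro allI impI)
    fix L assume "submod R M L \<and> D \<subseteq> L \<and> X <+>\<^bsub>M\<^esub> L = carrier M"
    then have L: "submod R M L" and DL: "D \<subseteq> L" and XL: "X <+>\<^bsub>M\<^esub> L = carrier M" by auto
    have AL: "submod R M (A <+>\<^bsub>M\<^esub> L)" by (rule sum_submod[OF A_sub L])
    have L_AL: "L \<subseteq> A <+>\<^bsub>M\<^esub> L" by (rule sub_sum_r[OF A_sub submod_sub[OF L]])
    have "X \<subseteq> A <+>\<^bsub>M\<^esub> L"
      unfolding XDA using DL L_AL sub_sum_l[OF L submod_sub[OF A_sub]] by (intro sum_least[OF AL]) auto
    then have "A <+>\<^bsub>M\<^esub> L = carrier M" using spanning_submod_eq_carrier[OF XL AL] L_AL by blast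
    then show "L = carrier M" using A L unfolding small_def by blast
  qed
  ultimately show ?thesis unfolding beta_star_def XD by simp
qed

lemma small_inside_complement:
  assumes X: "submod R M X" and D: "submod R M D" and E: "submod R M E" and K: "submod R M K"
    and DE: "D <+>\<^bsub>M\<^esub> E = carrier M" and DiE: "D \<inter> E = {\<zero>\<^bsub>M\<^esub>}"
    and small_XD: "small R (quot M D) (quot_sub M (X <+>\<^bsub>M\<^esub> D) D)"
    and KX: "K \<subseteq> X" and KE: "K \<subseteq> E"
  shows "small R M K"
  unfolding small_def
proof (intro conjI allI impI)
  show "submod R M K" by (rule K)
  fix L assume "submod R M L \<and> K <+>\<^bsub>M\<^esub> L = carrier M"
  then have L: "submod R M L" and KL: "K <+>\<^bsub>M\<^esub> L = carrier M" by auto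
  define L0 where "L0 = L \<inter> E"
  have L0: "submod R M L0" unfolding L0_def by (rule int_submod[OF L E])
  have XD: "submod R M (X <+>\<^bsub>M\<^esub> D)" and L0D: "submod R M (L0 <+>\<^bsub>M\<^esub> D)"
    using sum_submod X D L0 by auto
  have E_split: "E = K <+>\<^bsub>M\<^esub> L0"
    using modular_law[OF K L E KE] KL submod_sub[OF E] unfolding L0_def by auto
  have "(X <+>\<^bsub>M\<^esub> D) <+>\<^bsub>M\<^esub> (L0 <+>\<^bsub>M\<^esub> D) = carrier M"
  proof (rule spanning_submod_eq_carrier[OF DE sum_submod[OF XD L0D]])
    have XD_in: "X <+>\<^bsub>M\<^esub> D \<subseteq> (X <+>\<^bsub>M\<^esub> D) <+>\<^bsub>M\<^esub> (L0 <+>\<^bsub>M\<^esub> D)"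
      and L0D_in: "L0 <+>\<^bsub>M\<^esub> D \<subseteq> (X <+>\<^bsub>M\<^esub> D) <+>\<^bsub>M\<^esub> (L0 <+>\<^bsub>M\<^esub> D)"
      using sub_sum_l[OF L0D submod_sub[OF XD]] sub_sum_r[OF XD submod_sub[OF L0D]] by auto
    show "D \<subseteq> (X <+>\<^bsub>M\<^esub> D) <+>\<^bsub>M\<^esub> (L0 <+>\<^bsub>M\<^esub> D)"
      using XD_in sub_sum_r[OF X submod_sub[OF D]] by blast
    have "K \<subseteq> X <+>\<^bsub>M\<^esub> D" "L0 \<subseteq> L0 <+>\<^bsub>M\<^esub> D"
      using KX sub_sum_l[OF D submod_sub[OF X]] sub_sum_l[OF D submod_sub[OF L0]] by auto
    then show "E \<subseteq> (X <+>\<^bsub>M\<^esub> D) <+>\<^bsub>M\<^esub> (L0 <+>\<^bsub>M\<^esub> D)"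
      unfolding E_split using XD_in L0D_in by (intro sum_least[OF sum_submod[OF XD L0D]]) auto
  qed
  then have L0D_M: "L0 <+>\<^bsub>M\<^esub> D = carrier M"
    using small_XD L0D sub_sum_r[OF L0 submod_sub[OF D]] sub_sum_l[OF L0D submod_sub[OF XD]]
      sub_sum_r[OF X submod_sub[OF D]]
    unfolding small_quot_iff[OF XD D sub_sum_r[OF X submod_sub[OF D]]] by blast
  have "E = L0"
    using modular_law[OF L0 D E] L0D_M DiE sum_zero_r[OF submod_sub[OF L0]] submod_sub[OF E]
    unfolding L0_def by (auto simp: Int_commute)
  then have "K \<subseteq> L" using KE unfolding L0_def by auto
  then show "L = carrier M" using spanning_submod_eq_carrier[OF KL L] by blast
qed

lemma summand_plus_small_of_beta_star:
  assumes pi: "pi_projective R M" and X: "submod R M X" and DS: "direct_summand R M D"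
    and beta: "beta_star R M X D"
  shows "\<exists>D A. direct_summand R M D \<and> small R M A \<and> X = D <+>\<^bsub>M\<^esub> A \<and> D \<inter> A = {\<zero>\<^bsub>M\<^esub>}"
proof -
  have D: "submod R M D" using DS by (simp add: direct_summand_def)
  obtain E where E: "submod R M E" and DE: "D <+>\<^bsub>M\<^esub> E = carrier M"
    and DiE: "D \<inter> E = {\<zero>\<^bsub>M\<^esub>}"
    using DS unfolding direct_summand_def by blast
  have small_X: "small R (quot M X) (quot_sub M (X <+>\<^bsub>M\<^esub> D) X)"
    and small_D: "small R (quot M D) (quot_sub M (X <+>\<^bsub>M\<^esub> D) D)"
    using beta unfolding beta_star_def by auto
  have XD: "submod R M (X <+>\<^bsub>M\<^esub> D)" and XE: "submod R M (X <+>\<^bsub>M\<^esub> E)"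
    using sum_submod X D E by auto
  have "(X <+>\<^bsub>M\<^esub> D) <+>\<^bsub>M\<^esub> (X <+>\<^bsub>M\<^esub> E) = carrier M"
    using sub_sum_r[OF X submod_sub[OF D]] sub_sum_r[OF X submod_sub[OF E]]
      sub_sum_l[OF XE submod_sub[OF XD]] sub_sum_r[OF XD submod_sub[OF XE]]
    by (intro spanning_submod_eq_carrier[OF DE sum_submod[OF XD XE]]) blast+
  then have "X <+>\<^bsub>M\<^esub> E = carrier M"
    using small_X XE sub_sum_l[OF E submod_sub[OF X]]
    unfolding small_quot_iff[OF XD X sub_sum_l[OF D submod_sub[OF X]]] by blast
  then obtain D' where D': "submod R M D'" and D'X: "D' \<subseteq> X"
    and D'E: "D' <+>\<^bsub>M\<^esub> E = carrier M" and D'iE: "D' \<inter> E = {\<zero>\<^bsub>M\<^esub>}"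
    using pi_projective_complement_inside[OF pi X D E DE DiE] by blast
  have "X = D' <+>\<^bsub>M\<^esub> (E \<inter> X)"
    using modular_law[OF D' E X D'X] D'E submod_sub[OF X] by auto
  moreover have "D' \<inter> (E \<inter> X) = {\<zero>\<^bsub>M\<^esub>}"
    using D'iE submod_zero[OF X] by auto
  moreover have "small R M (E \<inter> X)"
    by (rule small_inside_complement[OF X D E int_submod[OF E X] DE DiE small_D]) auto
  moreover have "direct_summand R M D'"
    unfolding direct_summand_def using D' E D'E D'iE by blast
  ultimately show ?thesis by blast
qed

end

text \<open>Main result.  Cyclicity of X is only used to know that X is a submodule.\<close>
theorem proposition3p17:
  fixes R :: "('a, 'c) ring_scheme" and M :: "('a, 'b, 'd) rmodule_scheme"
  assumes "right_module R M" and "pi_projective R M"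
  shows "principally_Goldie_star_lifting R M \<longleftrightarrow>
    (\<forall>X. cyclic_submod R M X \<longrightarrow>
       (\<exists>D A. direct_summand R M D \<and> small R M A \<and>
              X = D <+>\<^bsub>M\<^esub> A \<and> D \<inter> A = {\<zero>\<^bsub>M\<^esub>}))"
proof -
  interpret right_module R M by fact
  have "(\<exists>D. direct_summand R M D \<and> beta_star R M X D) \<longleftrightarrow>
      (\<exists>D A. direct_summand R M D \<and> small R M A \<and> X = D <+>\<^bsub>M\<^esub> A \<and> D \<inter> A = {\<zero>\<^bsub>M\<^esub>})"
    if "cyclic_submod R M X" for X
  proof
    assume "\<exists>D. direct_summand R M D \<and> beta_star R M X D"
    then show "\<exists>D A. direct_summand R M D \<and> small R M A \<and> X = D <+>\<^bsub>M\<^esub> A \<and> D \<inter> A = {\<zero>\<^bsub>M\<^esub>}"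
      using summand_plus_small_of_beta_star[OF assms(2) cyclic_submod[OF that]] by blast
  next
    assume "\<exists>D A. direct_summand R M D \<and> small R M A \<and> X = D <+>\<^bsub>M\<^esub> A \<and> D \<inter> A = {\<zero>\<^bsub>M\<^esub>}"
    then show "\<exists>D. direct_summand R M D \<and> beta_star R M X D"
      using beta_star_of_sum_with_small[OF cyclic_submod[OF that]]
      unfolding direct_summand_def by blast
  qed
  then show ?thesis unfolding principally_Goldie_star_lifting_def by blast
qed

end
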